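(* Let $\lambda\in\mathbb Z^n\setminus\{0\}$ have coprime coefficients and let $\{\gamma_1,\dots,\gamma_{n-1}\}\subseteq\mathcal N(\lambda)$ be linearly independent in $\mathbb Q^n$. If $\alpha,\beta\in\mathbb N_0^n$ satisfy $[\mathbf X^\alpha-\mathbf X^\beta](\gamma_i)=0$ for each $i=1,\dots,n-1$, then $\mathbf X^{\lambda^+}-\mathbf X^{\lambda^-}$ divides $\mathbf X^\alpha-\mathbf X^\beta$ in $\mathbb Z[X_1,\dots,X_n]$.
   Context: For $\alpha\in\mathbb N_0^n$, $\mathbf X^\alpha=\prod_iX_i^{(\alpha)_i}$. For $\gamma\in\mathbb Z^n$ and a polynomial $p$, $p(\gamma)\in\mathbb Q(x)$ is the image of $p$ under $X_i\mapsto x^{(\gamma)_i}$. $\lambda^+,\lambda^-\in\mathbb N_0^n$ are the unique vectors with $\lambda=\lambda^+-\lambda^-$, $\lambda^+\cdot\lambda^-=0$. Coprime coefficients: gcd of coordinates equals $1$. $\mathcal N(\lambda)=\{\alpha\in\mathbb Z^n:\lambda\cdot\alpha=0\}$. *)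

theory Defs
  imports "HOL-Library.Cardinality" "HOL-Library.Poly_Mapping" "HOL-Computational_Algebra.Polynomial_Factorial"
begin

(* Polynomials in Z[X_i : i in 'n] (n = CARD('n)) are finitely supported maps
   from exponent vectors to int; product = convolution (HOL-Library.Poly_Mapping). *)

type_synonym 'n zpoly = "('n \<Rightarrow>\<^sub>0 nat) \<Rightarrow>\<^sub>0 int"

definition Xmon :: "('n \<Rightarrow>\<^sub>0 nat) \<Rightarrow> 'n zpoly" where
  "Xmon \<alpha> = Poly_Mapping.single \<alpha> 1"

definition expvec :: "('n::finite \<Rightarrow> nat) \<Rightarrow> ('n \<Rightarrow>\<^sub>0 nat)" where
  "expvec f = Abs_poly_mapping f"

definition posp :: "('n \<Rightarrow> int) \<Rightarrow> ('n \<Rightarrow> nat)" where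
  "posp l = (\<lambda>i. nat (l i))"

definition negp :: "('n \<Rightarrow> int) \<Rightarrow> ('n \<Rightarrow> nat)" where
  "negp l = (\<lambda>i. nat (- l i))"

(* p(gamma) in Q(x) = rat poly fract: image of p under X_i -> x^(gamma i). *)
definition eval_at :: "('n::finite \<Rightarrow> int) \<Rightarrow> 'n zpoly \<Rightarrow> rat poly fract" where
  "eval_at \<gamma> p = (\<Sum>(m :: 'n \<Rightarrow>\<^sub>0 nat)\<in>Poly_Mapping.keys p. of_int (Poly_Mapping.lookup p m) *
      (\<Prod>i\<in>UNIV. (to_fract [:0, 1:]) powi (\<gamma> i * int (Poly_Mapping.lookup m i))))"

end

theory Submission imports Defs "HOL-Analysis.Cartesian_Space" begin

(* Write w(gamma, m) = sum_i gamma_i m_i for the weight of an exponent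
   vector m under gamma.  Substituting X_i := x^(gamma_i) sends X^alpha - X^beta to
   x^w(gamma,alpha) - x^w(gamma,beta), which vanishes iff w(gamma,alpha) = w(gamma,beta).
   Hence a = alpha - beta is orthogonal to the n-1 independent vectors gamma_k, as is
   lambda.  Their orthogonal complement in Q^n is a line, so a = d * lambda with d
   rational, and since the coordinates of lambda are coprime, d is an integer t.
   Finally alpha = c + t*lambda^+ and beta = c + t*lambda^- with c = min(alpha, beta)
   (or the same with the roles of alpha, beta swapped when t < 0), so
   X^alpha - X^beta = X^c ((X^lambda^+)^t - (X^lambda^-)^t) is divisible by
   X^lambda^+ - X^lambda^-. *)

section \<open>Evaluating binomials at a weight vector\<close>

(* The weight of an exponent vector m under gamma: the exponent of x in X^m(gamma). *)
definition weight :: "('n::finite \<Rightarrow> int) \<Rightarrow> ('n \<Rightarrow>\<^sub>0 nat) \<Rightarrow> int" where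
  "weight \<gamma> m = (\<Sum>i\<in>UNIV. \<gamma> i * int (Poly_Mapping.lookup m i))"

lemma to_fract_power: "to_fract (p ^ n) = to_fract p ^ n"
  by (induction n) simp_all

(* The indeterminate x of Q(x) is not a root of unity, so its integer powers are distinct. *)
lemma powi_fract_X_inj:
  assumes "to_fract [:0, 1::rat:] powi a = to_fract [:0, 1:] powi b"
  shows "a = b"
proof -
  let ?x = "to_fract [:0, 1::rat:]"
  have trivial_power: "d = 0" if "?x powi d = 1" "d \<ge> 0" for d
  proof -
    have "to_fract ([:0, 1::rat:] ^ nat d) = to_fract 1"
      using that by (simp add: power_int_nonneg_exp to_fract_power)
    hence "[:0, 1::rat:] ^ nat d = 1" by (simp only: to_fract_eq_iff)
    hence "degree ([:0, 1::rat:] ^ nat d) = 0" by simp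
    thus ?thesis using that by (simp add: degree_power_eq)
  qed
  have "?x powi (b - a) = 1" "?x powi (a - b) = 1"
    using assms by (simp_all add: power_int_diff)
  thus ?thesis using trivial_power[of "b - a"] trivial_power[of "a - b"] by linarith
qed

lemma eval_at_binomial:
  "eval_at \<gamma> (Xmon \<alpha> - Xmon \<beta>) =
     to_fract [:0, 1::rat:] powi weight \<gamma> \<alpha> - to_fract [:0, 1:] powi weight \<gamma> \<beta>"
proof (cases "\<alpha> = \<beta>")
  case False
  let ?x = "to_fract [:0, 1::rat:]"
  have monomial: "(\<Prod>i\<in>UNIV. ?x powi (\<gamma> i * int (Poly_Mapping.lookup m i))) = ?x powi weight \<gamma> m"
    for m :: "'a \<Rightarrow>\<^sub>0 nat"
    unfolding weight_def by (induction rule: finite_induct[OF finite]) (auto simp: power_int_add)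
  have coeffs: "Poly_Mapping.lookup (Xmon \<alpha> - Xmon \<beta>) m =
      (if m = \<alpha> then 1 else if m = \<beta> then -1 else 0)" for m
    using False unfolding Xmon_def lookup_minus lookup_single when_def by auto
  have "Poly_Mapping.keys (Xmon \<alpha> - Xmon \<beta>) = {\<alpha>, \<beta>}"
    by (intro set_eqI) (simp only: in_keys_iff coeffs, auto)
  thus ?thesis using False unfolding eval_at_def monomial by (simp add: coeffs)
qed (simp add: eval_at_def)

lemma eval_at_binomial_eq_0_iff:
  "eval_at \<gamma> (Xmon \<alpha> - Xmon \<beta>) = 0 \<longleftrightarrow> weight \<gamma> \<alpha> = weight \<gamma> \<beta>"
  unfolding eval_at_binomial using powi_fract_X_inj by auto

section \<open>Orthogonal complement of n-1 independent vectors in Q^n\<close>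

definition dotq :: "rat^'n::finite \<Rightarrow> rat^'n \<Rightarrow> rat" where
  "dotq x y = (\<Sum>i\<in>UNIV. x$i * y$i)"

lemma dotq_comm: "dotq x y = dotq y x"
  unfolding dotq_def by (simp add: mult.commute)

lemma dotq_add_scale_right: "dotq x (c *s y + z) = c * dotq x y + dotq x z"
  unfolding dotq_def by (simp add: sum.distrib sum_distrib_left algebra_simps)

lemma dotq_diff_scale_right: "dotq x (y - c *s z) = dotq x y - c * dotq x z"
  unfolding dotq_def by (simp add: sum_subtractf sum_distrib_left algebra_simps)

lemma dotq_self_eq_0_iff: "dotq x x = 0 \<longleftrightarrow> x = 0"
proof
  assume "dotq x x = 0"
  hence "\<forall>i\<in>UNIV. x$i * x$i = 0"
    unfolding dotq_def by (subst (asm) sum_nonneg_eq_0_iff) auto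
  thus "x = 0" by (simp add: vec_eq_iff)
qed (simp add: dotq_def)

(* A nonzero vector orthogonal to S is orthogonal to all of span S, hence not in it. *)
lemma orthogonal_not_in_span:
  assumes "x \<noteq> 0" and orth: "\<forall>s\<in>S. dotq s x = 0"
  shows "x \<notin> vec.span S"
proof
  have "dotq x y = 0" if "y \<in> vec.span S" for y
    using that
  proof (induction rule: vec.span_induct_alt)
    case base show ?case by (simp add: dotq_def)
  next
    case (step c s y) thus ?case using orth by (simp add: dotq_add_scale_right dotq_comm[of x])
  qed
  moreover assume "x \<in> vec.span S"
  ultimately have "dotq x x = 0" by blast
  with \<open>x \<noteq> 0\<close> show False by (simp add: dotq_self_eq_0_iff)
qed

(* If S is independent of size at least n-1, any V orthogonal to S is a multiple of a
   nonzero L orthogonal to S: otherwise the component W of V orthogonal to L would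
   extend S by two further independent vectors, W and L. *)
lemma orthogonal_complement_is_line:
  fixes L V :: "rat^'n::finite"
  assumes "L \<noteq> 0" and indep: "vec.independent S" and card: "CARD('n) \<le> card S + 1"
    and orthL: "\<forall>s\<in>S. dotq s L = 0" and orthV: "\<forall>s\<in>S. dotq s V = 0"
  shows "\<exists>d. V = d *s L"
proof (rule ccontr)
  assume no_multiple: "\<nexists>d. V = d *s L"
  have LL: "dotq L L \<noteq> 0" using \<open>L \<noteq> 0\<close> by (simp add: dotq_self_eq_0_iff)
  define W where "W = V - (dotq L V / dotq L L) *s L"
  have "W \<noteq> 0"
  proof
    assume "W = 0"
    hence "V = (dotq L V / dotq L L) *s L" by (simp add: W_def)
    with no_multiple show False by blast
  qed
  have WL: "dotq L W = 0"
    using LL by (simp add: W_def dotq_diff_scale_right)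
  have WS: "\<forall>s\<in>S. dotq s W = 0"
    using orthL orthV by (simp add: W_def dotq_diff_scale_right)
  have W_out: "W \<notin> vec.span S"
    using \<open>W \<noteq> 0\<close> WS by (rule orthogonal_not_in_span)
  have L_out: "L \<notin> vec.span (insert W S)"
    using \<open>L \<noteq> 0\<close> WL orthL by (intro orthogonal_not_in_span) (auto simp: dotq_comm[of W])
  have indep2: "vec.independent (insert L (insert W S))"
    using indep W_out L_out by (intro vec.independent_insertI)
  have "finite S" using indep by (rule vec.finiteI_independent)
  moreover have "W \<notin> S" using W_out by (auto intro: vec.span_base)
  moreover have "L \<notin> insert W S" using L_out by (auto intro: vec.span_base)
  ultimately have "card (insert L (insert W S)) = card S + 2" by simp
  moreover have "card (insert L (insert W S)) \<le> CARD('n)"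
    using vec.independent_card_le_dim[OF subset_UNIV indep2] by (simp add: card_cart_basis)
  ultimately show False using card by simp
qed

lemma independent_family:
  fixes v :: "nat \<Rightarrow> rat^'n::finite"
  assumes no_relation: "\<And>c. (\<Sum>k<m. c k *s v k) = 0 \<Longrightarrow> \<forall>k<m. c k = 0"
  shows "vec.independent (v ` {..<m})" and "card (v ` {..<m}) = m"
proof -
  have inj: "inj_on v {..<m}"
  proof (rule inj_onI, rule ccontr)
    fix k l assume kl: "k \<in> {..<m}" "l \<in> {..<m}" "v k = v l" "k \<noteq> l"
    define c :: "nat \<Rightarrow> rat" where "c j = (if j = k then 1 else if j = l then -1 else 0)" for j
    have "c j *s v j = (if j = k then v k else 0) - (if j = l then v l else 0)" for j
      using kl by (simp add: c_def)
    hence "(\<Sum>j<m. c j *s v j) = v k - v l"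
      using kl by (simp add: sum_subtractf)
    hence "c k = 0" using no_relation[of c] kl by simp
    thus False by (simp add: c_def)
  qed
  thus "card (v ` {..<m}) = m" by (simp add: card_image)
  show "vec.independent (v ` {..<m})"
  proof (rule vec.independent_if_scalars_zero)
    fix f x assume "(\<Sum>y\<in>v ` {..<m}. f y *s y) = 0" "x \<in> v ` {..<m}"
    thus "f x = 0" using no_relation[of "f \<circ> v"] by (auto simp: sum.reindex[OF inj])
  qed simp
qed

lemma orthogonal_to_independent_rows:
  fixes lam a :: "'n::finite \<Rightarrow> int" and g :: "nat \<Rightarrow> 'n \<Rightarrow> int"
  assumes "lam \<noteq> (\<lambda>_. 0)"
    and rows_indep: "\<And>c :: nat \<Rightarrow> rat. (\<forall>j. (\<Sum>k<CARD('n) - 1. c k * of_int (g k j)) = 0)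
            \<Longrightarrow> (\<forall>k<CARD('n) - 1. c k = 0)"
    and orth_lam: "\<And>k. k < CARD('n) - 1 \<Longrightarrow> (\<Sum>i\<in>UNIV. lam i * g k i) = 0"
    and orth_a: "\<And>k. k < CARD('n) - 1 \<Longrightarrow> (\<Sum>i\<in>UNIV. a i * g k i) = 0"
  shows "\<exists>d::rat. \<forall>i. of_int (a i) = d * of_int (lam i)"
proof -
  define G :: "nat \<Rightarrow> rat^'n" where "G k = (\<chi> i. of_int (g k i))" for k
  define L :: "rat^'n" where "L = (\<chi> i. of_int (lam i))"
  define V :: "rat^'n" where "V = (\<chi> i. of_int (a i))"
  have no_relation: "\<forall>k<CARD('n) - 1. c k = 0" if "(\<Sum>k<CARD('n) - 1. c k *s G k) = 0" for c
    using that by (intro rows_indep) (simp add: vec_eq_iff sum_component G_def)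
  note S = independent_family[of G "CARD('n) - 1", OF no_relation]
  have "dotq (G k) L = 0 \<and> dotq (G k) V = 0" if "k < CARD('n) - 1" for k
  proof -
    have "dotq (G k) L = of_int (\<Sum>i\<in>UNIV. lam i * g k i)"
         "dotq (G k) V = of_int (\<Sum>i\<in>UNIV. a i * g k i)"
      by (simp_all add: dotq_def G_def L_def V_def mult.commute)
    thus ?thesis using orth_lam[OF that] orth_a[OF that] by simp
  qed
  hence "\<forall>s\<in>G ` {..<CARD('n) - 1}. dotq s L = 0" "\<forall>s\<in>G ` {..<CARD('n) - 1}. dotq s V = 0"
    by auto
  moreover have "L \<noteq> 0" using \<open>lam \<noteq> (\<lambda>_. 0)\<close> by (auto simp: L_def vec_eq_iff)
  ultimately obtain d where "V = d *s L"
    using orthogonal_complement_is_line[OF _ S(1)] S(2) by fastforce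
  thus ?thesis by (auto simp: vec_eq_iff V_def L_def)
qed

section \<open>Integrality\<close>

(* A rational multiple of a primitive integer vector that is itself integral is an
   integer multiple: the denominator of the factor divides every coordinate. *)
lemma rat_multiple_of_primitive_is_int_multiple:
  fixes lam a :: "'n \<Rightarrow> int" and d :: rat
  assumes primitive: "Gcd (range lam) = 1" and multiple: "\<forall>i. of_int (a i) = d * of_int (lam i)"
  shows "\<exists>t::int. \<forall>i. a i = t * lam i"
proof -
  obtain p q where pq: "quotient_of d = (p, q)" by (cases "quotient_of d") auto
  have "q > 0" "coprime p q" "d = of_int p / of_int q"
    using quotient_of_denom_pos[OF pq] quotient_of_coprime[OF pq] quotient_of_div[OF pq] by auto
  have cleared: "a i * q = p * lam i" for i
  proof -
    have "of_int (a i) * of_int q = (of_int p * of_int (lam i) :: rat)"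
      using multiple \<open>q > 0\<close> \<open>d = of_int p / of_int q\<close> by (simp add: field_simps)
    thus ?thesis by (simp flip: of_int_mult)
  qed
  have "q dvd lam i" for i
  proof -
    have "q dvd p * lam i" by (metis cleared dvd_triv_right)
    thus ?thesis using \<open>coprime p q\<close> by (simp add: coprime_dvd_mult_right_iff coprime_commute)
  qed
  hence "q dvd Gcd (range lam)" by (intro Gcd_greatest) auto
  hence "q = 1" using primitive \<open>q > 0\<close> by simp
  thus ?thesis using cleared by auto
qed

section \<open>Divisibility of binomials\<close>

lemma diff_dvd_power_diff: "(x - y) dvd (x ^ n - (y :: 'a :: comm_ring_1) ^ n)"
  by (simp only: power_diff_sumr2 dvd_triv_left)

lemma lookup_expvec: "Poly_Mapping.lookup (expvec (f :: 'n::finite \<Rightarrow> nat)) = f"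
  unfolding expvec_def by (rule lookup_Abs_poly_mapping) simp

lemma Xmon_mult: "Xmon a * Xmon b = Xmon (a + b)"
  unfolding Xmon_def by (simp add: mult_single)

lemma Xmon_power: "Xmon (a :: 'n::finite \<Rightarrow>\<^sub>0 nat) ^ t = Xmon (expvec (\<lambda>i. t * Poly_Mapping.lookup a i))"
proof (induction t)
  case 0
  have "expvec (\<lambda>i. 0 * Poly_Mapping.lookup a i) = 0"
    by (rule poly_mapping_eqI) (simp add: lookup_expvec)
  thus ?case by (simp add: Xmon_def)
next
  case (Suc t)
  have "a + expvec (\<lambda>i. t * Poly_Mapping.lookup a i) = expvec (\<lambda>i. Suc t * Poly_Mapping.lookup a i)"
    by (rule poly_mapping_eqI) (simp add: lookup_expvec lookup_add)
  thus ?case using Suc by (simp add: Xmon_mult)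
qed

lemma min_plus_positive_part:
  assumes "int a - int b = int t * l"
  shows "min a b + t * nat l = a"
proof (cases "l \<ge> 0")
  case True
  hence "int (t * nat l) = int t * l" by simp
  thus ?thesis using assms by linarith
next
  case False
  hence "int t * l \<le> 0" by (simp add: mult_nonneg_nonpos)
  thus ?thesis using assms False by simp
qed

(* If alpha - beta = t * lambda with t >= 0, then with c = min(alpha, beta)
   X^alpha - X^beta = X^c ((X^lambda^+)^t - (X^lambda^-)^t). *)
lemma binomial_dvd_nat_multiple:
  fixes lam :: "'n::finite \<Rightarrow> int" and \<alpha> \<beta> :: "'n \<Rightarrow>\<^sub>0 nat"
  assumes diff: "\<forall>i. int (Poly_Mapping.lookup \<alpha> i) - int (Poly_Mapping.lookup \<beta> i) = int t * lam i"
  shows "(Xmon (expvec (posp lam)) - Xmon (expvec (negp lam))) dvd (Xmon \<alpha> - Xmon \<beta>)"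
proof -
  define c where "c = expvec (\<lambda>i. min (Poly_Mapping.lookup \<alpha> i) (Poly_Mapping.lookup \<beta> i))"
  let ?P = "Xmon (expvec (posp lam))" and ?N = "Xmon (expvec (negp lam))"
  have "Xmon c * ?P ^ t = Xmon \<alpha>"
    unfolding Xmon_power Xmon_mult
  proof (intro arg_cong[where f = Xmon] poly_mapping_eqI)
    fix i
    show "Poly_Mapping.lookup (c + expvec (\<lambda>i. t * Poly_Mapping.lookup (expvec (posp lam)) i)) i =
        Poly_Mapping.lookup \<alpha> i"
      using min_plus_positive_part[of _ _ t "lam i"] diff
      by (simp add: lookup_add lookup_expvec c_def posp_def)
  qed
  moreover have "Xmon c * ?N ^ t = Xmon \<beta>"
    unfolding Xmon_power Xmon_mult
  proof (intro arg_cong[where f = Xmon] poly_mapping_eqI)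
    fix i
    have "int (Poly_Mapping.lookup \<beta> i) - int (Poly_Mapping.lookup \<alpha> i) = int t * - lam i"
      using diff by (simp add: algebra_simps)
    from min_plus_positive_part[OF this]
    show "Poly_Mapping.lookup (c + expvec (\<lambda>i. t * Poly_Mapping.lookup (expvec (negp lam)) i)) i =
        Poly_Mapping.lookup \<beta> i"
      by (simp add: lookup_add lookup_expvec c_def negp_def min.commute)
  qed
  ultimately have "Xmon \<alpha> - Xmon \<beta> = Xmon c * (?P ^ t - ?N ^ t)"
    by (simp add: right_diff_distrib)
  thus ?thesis by (simp add: diff_dvd_power_diff dvd_mult)
qed

(* The same for an arbitrary integer multiple: for t < 0 swap alpha and beta. *)
lemma binomial_dvd_int_multiple:
  fixes lam :: "'n::finite \<Rightarrow> int" and \<alpha> \<beta> :: "'n \<Rightarrow>\<^sub>0 nat"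
  assumes diff: "\<forall>i. int (Poly_Mapping.lookup \<alpha> i) - int (Poly_Mapping.lookup \<beta> i) = t * lam i"
  shows "(Xmon (expvec (posp lam)) - Xmon (expvec (negp lam))) dvd (Xmon \<alpha> - Xmon \<beta>)"
proof (cases "t \<ge> 0")
  case True
  thus ?thesis using diff by (intro binomial_dvd_nat_multiple[of _ _ "nat t"]) simp
next
  case False
  have "\<forall>i. int (Poly_Mapping.lookup \<beta> i) - int (Poly_Mapping.lookup \<alpha> i) = int (nat (- t)) * lam i"
    using diff False by (simp add: algebra_simps)
  hence "(Xmon (expvec (posp lam)) - Xmon (expvec (negp lam))) dvd (Xmon \<beta> - Xmon \<alpha>)"
    by (rule binomial_dvd_nat_multiple)
  hence "(Xmon (expvec (posp lam)) - Xmon (expvec (negp lam))) dvd - (Xmon \<alpha> - Xmon \<beta>)"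
    by simp
  thus ?thesis by (simp only: dvd_minus_iff)
qed

theorem lemma3p5:
  fixes lam :: "'n::finite \<Rightarrow> int"
    and g :: "nat \<Rightarrow> 'n \<Rightarrow> int"
    and \<alpha> \<beta> :: "'n \<Rightarrow>\<^sub>0 nat"
  assumes "lam \<noteq> (\<lambda>_. 0)"
    and "Gcd (range lam) = 1"
    and "\<And>k. k < CARD('n) - 1 \<Longrightarrow> (\<Sum>i\<in>UNIV. lam i * g k i) = 0"
    and "\<And>c :: nat \<Rightarrow> rat. (\<forall>j. (\<Sum>k<CARD('n) - 1. c k * of_int (g k j)) = 0)
            \<Longrightarrow> (\<forall>k<CARD('n) - 1. c k = 0)"
    and "\<And>k. k < CARD('n) - 1 \<Longrightarrow> eval_at (g k) (Xmon \<alpha> - Xmon \<beta>) = 0"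
  shows "(Xmon (expvec (posp lam)) - Xmon (expvec (negp lam))) dvd (Xmon \<alpha> - Xmon \<beta>)"
proof -
  define a where "a i = int (Poly_Mapping.lookup \<alpha> i) - int (Poly_Mapping.lookup \<beta> i)" for i
  have "weight (g k) \<alpha> = weight (g k) \<beta>" if "k < CARD('n) - 1" for k
    using assms(5)[OF that] by (simp add: eval_at_binomial_eq_0_iff)
  hence "(\<Sum>i\<in>UNIV. a i * g k i) = 0" if "k < CARD('n) - 1" for k
    using that by (simp add: weight_def a_def algebra_simps sum_subtractf)
  then obtain d :: rat where "\<forall>i. of_int (a i) = d * of_int (lam i)"
    using orthogonal_to_independent_rows[of lam g a] assms(1,3,4) by blast
  then obtain t where "\<forall>i. a i = t * lam i"
    using rat_multiple_of_primitive_is_int_multiple[OF assms(2)] by blast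
  thus ?thesis unfolding a_def by (rule binomial_dvd_int_multiple)
qed

end
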